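(* Consistent Clifford deformations give rise to commuting stabilizers of the surface code.
   Context: Consider the surface code with qubits placed on a rectangular lattice $L$, whose stabilizer group is generated by star operators $A_{\Diamond} = \prod_{i \in \Diamond} X_i$ and plaquette operators $B_{\square} = \prod_{j \in \square} Z_j$, where $\Diamond$ and $\square$ denote cells of four nearest-neighbour qubits forming, respectively, the dual and primal sub-lattices (this is the CSS surface code). A Clifford deformation conjugates each physical qubit $i \in L$ independently by a single-qubit Clifford unitary, which amounts to replacing, on that qubit, each Pauli operator appearing in the stabilizers by another Pauli operator. Denote by $\sigma_i^s$ the (non-identity) Pauli operator measured on qubit $i \in L$ by stabilizer $s$. Each qubit $i$ is surrounded by stabilizers $v_1, v_2$ located vertically from it and stabilizers $h_1, h_2$ located horizontally from it. A Clifford deformation is called consistent if, for every qubit $i$, $\sigma_i^{v_1} = \sigma_i^{v_2} \neq \sigma_i^{h_1} = \sigma_i^{h_2}$. (For example, in the CSS surface code a qubit has $\sigma_i^{v_1} = \sigma_i^{v_2} = X_i$ and $\sigma_i^{h_1} = \sigma_i^{h_2} = Z_i$.) *)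

theory Defs
  imports Main
begin

text \<open>Single-qubit Pauli operators modulo phase (I = identity).\<close>
datatype pauli = PI | PX | PY | PZ

text \<open>Geometry of the (bulk, unbounded) rectangular surface-code lattice.\<close>
type_synonym site = "int \<times> int"

definition qubit_site :: "site \<Rightarrow> bool" where
  "qubit_site p \<longleftrightarrow> odd (fst p + snd p)"

definition stab_site :: "site \<Rightarrow> bool" where
  "stab_site s \<longleftrightarrow> even (fst s + snd s)"

definition is_star :: "site \<Rightarrow> bool" where
  "is_star s \<longleftrightarrow> stab_site s \<and> even (fst s)"

definition is_plaquette :: "site \<Rightarrow> bool" where
  "is_plaquette s \<longleftrightarrow> stab_site s \<and> odd (fst s)"

definition cell :: "site \<Rightarrow> site set" where
  "cell s = {(fst s + 1, snd s), (fst s - 1, snd s), (fst s, snd s + 1), (fst s, snd s - 1)}"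

definition vert_up :: "site \<Rightarrow> site" where "vert_up i = (fst i, snd i + 1)"
definition vert_down :: "site \<Rightarrow> site" where "vert_down i = (fst i, snd i - 1)"
definition horiz_right :: "site \<Rightarrow> site" where "horiz_right i = (fst i + 1, snd i)"
definition horiz_left :: "site \<Rightarrow> site" where "horiz_left i = (fst i - 1, snd i)"

definition css_pauli :: "site \<Rightarrow> pauli" where
  "css_pauli s = (if is_star s then PX else PZ)"

text \<open>A single-qubit Clifford unitary acts by conjugation on the non-identity
  Paulis as a permutation of {X,Y,Z} (up to signs, irrelevant for commutation),
  and every such permutation arises.\<close>
definition clifford_action :: "(pauli \<Rightarrow> pauli) \<Rightarrow> bool" where
  "clifford_action f \<longleftrightarrow> f PI = PI \<and> bij_betw f {PX, PY, PZ} {PX, PY, PZ}"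

definition clifford_deformation :: "(site \<Rightarrow> pauli \<Rightarrow> pauli) \<Rightarrow> bool" where
  "clifford_deformation C \<longleftrightarrow> (\<forall>i. qubit_site i \<longrightarrow> clifford_action (C i))"

definition sigma :: "(site \<Rightarrow> pauli \<Rightarrow> pauli) \<Rightarrow> site \<Rightarrow> site \<Rightarrow> pauli" where
  "sigma C i s = C i (css_pauli s)"

definition deformed_stab :: "(site \<Rightarrow> pauli \<Rightarrow> pauli) \<Rightarrow> site \<Rightarrow> (site \<Rightarrow> pauli)" where
  "deformed_stab C s = (\<lambda>i. if i \<in> cell s then sigma C i s else PI)"

definition consistent :: "(site \<Rightarrow> pauli \<Rightarrow> pauli) \<Rightarrow> bool" where
  "consistent C \<longleftrightarrow> (\<forall>i. qubit_site i \<longrightarrow>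
     sigma C i (vert_up i) = sigma C i (vert_down i) \<and>
     sigma C i (vert_down i) \<noteq> sigma C i (horiz_left i) \<and>
     sigma C i (horiz_left i) = sigma C i (horiz_right i))"

definition anticommute1 :: "pauli \<Rightarrow> pauli \<Rightarrow> bool" where
  "anticommute1 p q \<longleftrightarrow> p \<noteq> PI \<and> q \<noteq> PI \<and> p \<noteq> q"

text \<open>Two finitely supported Pauli strings commute iff they anticommute on an
  even number of tensor factors.\<close>
definition pauli_commute :: "('q \<Rightarrow> pauli) \<Rightarrow> ('q \<Rightarrow> pauli) \<Rightarrow> bool" where
  "pauli_commute P Q \<longleftrightarrow> even (card {i. anticommute1 (P i) (Q i)})"

end

theory Submission
  imports Defs
begin

text \<open>A single-qubit Clifford action fixes the identity and permutes the non-identity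
  Paulis, so it preserves on every qubit whether two Paulis anticommute. Hence a
  Clifford deformation anticommutes on exactly the same qubits as the undeformed CSS
  stabilizers, and two of those anticommute only if one is a star and the other a
  plaquette; such cells, being diagonally offset, share either no qubit or two.\<close>

definition css_stab :: "site \<Rightarrow> (site \<Rightarrow> pauli)" where
  "css_stab s = (\<lambda>i. if i \<in> cell s then css_pauli s else PI)"

lemma qubit_site_if_in_cell: "stab_site s \<Longrightarrow> i \<in> cell s \<Longrightarrow> qubit_site i"
  by (auto simp: cell_def stab_site_def qubit_site_def)

lemma cell_inter_diagonal:
  assumes "odd (fst t - fst s)" and "odd (snd t - snd s)"
  shows "cell s \<inter> cell t =
    (if \<bar>fst t - fst s\<bar> = 1 \<and> \<bar>snd t - snd s\<bar> = 1
     then {(fst s, snd t), (fst t, snd s)} else {})"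
proof -
  have "fst t \<noteq> fst s" "snd t \<noteq> snd s" using assms by auto
  then show ?thesis by (cases s, cases t) (auto simp: cell_def)
qed

lemma even_card_cell_inter_diagonal:
  assumes "odd (fst t - fst s)" and "odd (snd t - snd s)"
  shows "even (card (cell s \<inter> cell t))"
proof -
  have "fst t \<noteq> fst s" using assms by auto
  then show ?thesis by (simp add: cell_inter_diagonal[OF assms])
qed

lemma anticommute1_clifford_action_iff:
  assumes "clifford_action f"
  shows "anticommute1 (f p) (f q) \<longleftrightarrow> anticommute1 p q"
proof -
  have fI: "f PI = PI" and bij: "bij_betw f {PX, PY, PZ} {PX, PY, PZ}"
    using assms by (auto simp: clifford_action_def)
  have nonid: "r \<in> {PX, PY, PZ} \<longleftrightarrow> r \<noteq> PI" for r
    by (cases r) auto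
  have f_nonid: "f r \<noteq> PI \<longleftrightarrow> r \<noteq> PI" for r
    using bij_betw_apply[OF bij] fI nonid by metis
  have "f p = f q \<longleftrightarrow> p = q" if "p \<noteq> PI" "q \<noteq> PI"
    using that nonid inj_on_eq_iff[OF bij_betw_imp_inj_on[OF bij]] by metis
  then show ?thesis
    unfolding anticommute1_def using f_nonid by blast
qed

lemma anticommute1_deformed_stab_iff:
  assumes "clifford_deformation C" and "stab_site s" and "stab_site t"
  shows "anticommute1 (deformed_stab C s i) (deformed_stab C t i)
    \<longleftrightarrow> anticommute1 (css_stab s i) (css_stab t i)"
proof (cases "qubit_site i")
  case True
  then have act: "clifford_action (C i)"
    using assms(1) unfolding clifford_deformation_def by blast
  then have "deformed_stab C r i = C i (css_stab r i)" for r
    by (simp add: deformed_stab_def css_stab_def sigma_def clifford_action_def)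
  then show ?thesis using anticommute1_clifford_action_iff[OF act] by simp
next
  case False
  then have "i \<notin> cell s" "i \<notin> cell t"
    using assms(2,3) qubit_site_if_in_cell by blast+
  then show ?thesis
    by (simp add: deformed_stab_def css_stab_def)
qed

lemma pauli_commute_css_stab:
  assumes "stab_site s" and "stab_site t"
  shows "pauli_commute (css_stab s) (css_stab t)"
proof (cases "css_pauli s = css_pauli t")
  case True
  then have anti: "{i. anticommute1 (css_stab s i) (css_stab t i)} = {}"
    by (auto simp: anticommute1_def css_stab_def)
  show ?thesis unfolding pauli_commute_def anti by simp
next
  case False
  then have "{i. anticommute1 (css_stab s i) (css_stab t i)} = cell s \<inter> cell t"
    by (auto simp: anticommute1_def css_stab_def css_pauli_def)
  moreover have dx: "odd (fst t - fst s)"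
    using False by (auto simp: css_pauli_def is_star_def assms split: if_splits)
  moreover have "odd (snd t - snd s)"
    using dx assms by (simp add: stab_site_def)
  ultimately show ?thesis
    by (simp add: pauli_commute_def even_card_cell_inter_diagonal)
qed

theorem lemma1:
  fixes C :: "site \<Rightarrow> pauli \<Rightarrow> pauli"
  assumes "clifford_deformation C"
    and "consistent C"
    and "stab_site s" and "stab_site t"
  shows "pauli_commute (deformed_stab C s) (deformed_stab C t)"
proof -
  have "{i. anticommute1 (deformed_stab C s i) (deformed_stab C t i)}
      = {i. anticommute1 (css_stab s i) (css_stab t i)}"
    using anticommute1_deformed_stab_iff[OF assms(1,3,4)] by simp
  then show ?thesis
    using pauli_commute_css_stab[OF assms(3,4)] by (simp add: pauli_commute_def)
qed

end
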